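(* Let $p\in(1,\infty)$. A metric space has property HC$_{p,d}$ if and only if it has property HIC$_{p,d}$.
   Context: For infinite $\mathbb M\subseteq\mathbb N$ and $k\in\mathbb N$, $[\mathbb M]^k$ is the set of $\bar n=(n_1,\dots,n_k)\in\mathbb M^k$ with $n_1<\dots<n_k$, with Hamming distance $d_{\mathbb H}(\bar n,\bar m)=|\{j:n_j\ne m_j\}|$; $[\mathbb M]^\omega$ is the set of infinite subsets of $\mathbb M$; $I_k(\mathbb M)=\{(\bar n,\bar m): n_1<m_1<\dots<n_k<m_k\}$; $H_j(\mathbb M)=\{(\bar n,\bar m)\in([\mathbb M]^k)^2: n_i=m_i\ (i\ne j),\ n_j<m_j\}$. For a metric space $(M,d)$, $\lambda>0$ and Lipschitz $f:([\mathbb N]^k,d_{\mathbb H})\to M$, put $\alpha_j=\sup_{(\bar n,\bar m)\in H_j(\mathbb N)}d(f(\bar n),f(\bar m))$. $M$ has $\lambda$-HIC$_{p,d}$ if for every $k$ and every such $f$ there is $\mathbb M\in[\mathbb N]^\omega$ with $d(f(\bar n),f(\bar m))\le\lambda(\sum_{j=1}^k\alpha_j^p)^{1/p}$ for all $(\bar n,\bar m)\in I_k(\mathbb M)$. $M$ has $\lambda$-HC$_{p,d}$ if for every $k$ and every such $f$ there are $\bar n,\bar m\in[\mathbb N]^k$ with $\bar n\cap\bar m=\varnothing$ (as sets) and $d(f(\bar n),f(\bar m))\le\lambda(\sum_{j=1}^k\alpha_j^p)^{1/p}$. HIC$_{p,d}$ (resp. HC$_{p,d}$) means $\lambda$-HIC$_{p,d}$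 (resp. $\lambda$-HC$_{p,d}$) for some $\lambda>0$. *)

theory Defs
  imports "HOL-Analysis.Analysis"
begin

text \<open>Elements of [M]^k are represented as strictly increasing lists of length k
  with entries in M; the paper's index j \<in> {1..k} corresponds to list index j-1.\<close>

definition incr_tuples :: "nat set \<Rightarrow> nat \<Rightarrow> nat list set" where
  "incr_tuples M k = {xs. length xs = k \<and> sorted_wrt (<) xs \<and> set xs \<subseteq> M}"

definition hamming :: "nat list \<Rightarrow> nat list \<Rightarrow> nat" where
  "hamming xs ys = card {j. j < length xs \<and> xs ! j \<noteq> ys ! j}"

definition interlaced :: "nat set \<Rightarrow> nat \<Rightarrow> (nat list \<times> nat list) set" where
  "interlaced M k = {(xs, ys). xs \<in> incr_tuples M k \<and> ys \<in> incr_tuples M k \<and>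
     (\<forall>i<k. xs ! i < ys ! i \<and> (Suc i < k \<longrightarrow> ys ! i < xs ! Suc i))}"

definition Hpairs :: "nat set \<Rightarrow> nat \<Rightarrow> nat \<Rightarrow> (nat list \<times> nat list) set" where
  "Hpairs M k j = {(xs, ys). xs \<in> incr_tuples M k \<and> ys \<in> incr_tuples M k \<and>
     (\<forall>i<k. i \<noteq> j \<longrightarrow> xs ! i = ys ! i) \<and> xs ! j < ys ! j}"

definition hamming_lipschitz ::
  "'a set \<Rightarrow> ('a \<Rightarrow> 'a \<Rightarrow> real) \<Rightarrow> nat \<Rightarrow> (nat list \<Rightarrow> 'a) \<Rightarrow> bool" where
  "hamming_lipschitz M d k f \<longleftrightarrow>
     f ` incr_tuples UNIV k \<subseteq> M \<and>
     (\<exists>C. \<forall>xs\<in>incr_tuples UNIV k. \<forall>ys\<in>incr_tuples UNIV k.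
        d (f xs) (f ys) \<le> C * real (hamming xs ys))"

definition alpha_coef ::
  "('a \<Rightarrow> 'a \<Rightarrow> real) \<Rightarrow> nat \<Rightarrow> (nat list \<Rightarrow> 'a) \<Rightarrow> nat \<Rightarrow> real" where
  "alpha_coef d k f j = (SUP (xs, ys) \<in> Hpairs UNIV k j. d (f xs) (f ys))"

definition alpha_norm ::
  "real \<Rightarrow> ('a \<Rightarrow> 'a \<Rightarrow> real) \<Rightarrow> nat \<Rightarrow> (nat list \<Rightarrow> 'a) \<Rightarrow> real" where
  "alpha_norm p d k f = (\<Sum>j<k. alpha_coef d k f j powr p) powr (1 / p)"

definition lambda_HIC :: "real \<Rightarrow> real \<Rightarrow> 'a set \<Rightarrow> ('a \<Rightarrow> 'a \<Rightarrow> real) \<Rightarrow> bool" where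
  "lambda_HIC lam p M d \<longleftrightarrow>
     (\<forall>k f. hamming_lipschitz M d k f \<longrightarrow>
        (\<exists>N. infinite N \<and>
           (\<forall>(xs, ys) \<in> interlaced N k. d (f xs) (f ys) \<le> lam * alpha_norm p d k f)))"

definition lambda_HC :: "real \<Rightarrow> real \<Rightarrow> 'a set \<Rightarrow> ('a \<Rightarrow> 'a \<Rightarrow> real) \<Rightarrow> bool" where
  "lambda_HC lam p M d \<longleftrightarrow>
     (\<forall>k f. hamming_lipschitz M d k f \<longrightarrow>
        (\<exists>xs \<in> incr_tuples UNIV k. \<exists>ys \<in> incr_tuples UNIV k.
           set xs \<inter> set ys = {} \<and> d (f xs) (f ys) \<le> lam * alpha_norm p d k f))"

definition HIC :: "real \<Rightarrow> 'a set \<Rightarrow> ('a \<Rightarrow> 'a \<Rightarrow> real) \<Rightarrow> bool" where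
  "HIC p M d \<longleftrightarrow> (\<exists>lam>0. lambda_HIC lam p M d)"

definition HC :: "real \<Rightarrow> 'a set \<Rightarrow> ('a \<Rightarrow> 'a \<Rightarrow> real) \<Rightarrow> bool" where
  "HC p M d \<longleftrightarrow> (\<exists>lam>0. lambda_HC lam p M d)"

end

theory Submission
  imports Defs "HOL-Library.Ramsey"
begin

text \<open>An interlaced pair is disjoint, so HIC gives HC with the same constant. Conversely, the
  relative order of the \<open>2k\<close> entries of a disjoint pair \<open>(xs, ys)\<close>, its type, takes finitely
  many values, and a pair is determined by its support and its type. Ramsey's theorem therefore
  yields a subsequence \<open>e\<close> along which the validity of \<open>d(f xs, f ys) \<le> \<lambda>\<parallel>\<alpha>\<parallel>\<^sub>p\<close> depends only
  on the type, and HC applied to \<open>f \<circ> e\<close>, whose coefficients \<open>\<alpha>\<^sub>j\<close> do not exceed those of \<open>f\<close>,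
  exhibits one good type. An interlaced pair of sufficiently spread out indices has a common
  partner \<open>zs\<close> forming a pair of that type with both of its members, and the triangle inequality
  through \<open>f zs\<close> gives HIC with constant \<open>2\<lambda>\<close>.\<close>

lemma incr_tuples_length: "xs \<in> incr_tuples N k \<Longrightarrow> length xs = k"
  by (simp add: incr_tuples_def)

lemma incr_tuples_UNIV: "xs \<in> incr_tuples N k \<Longrightarrow> xs \<in> incr_tuples UNIV k"
  by (simp add: incr_tuples_def)

lemma incr_tuples_nth_less: "xs \<in> incr_tuples N k \<Longrightarrow> i < j \<Longrightarrow> j < k \<Longrightarrow> xs!i < xs!j"
  by (auto simp: incr_tuples_def sorted_wrt_iff_nth_less)

lemma incr_tuples_nth_le: "xs \<in> incr_tuples N k \<Longrightarrow> i \<le> j \<Longrightarrow> j < k \<Longrightarrow> xs!i \<le> xs!j"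
  using incr_tuples_nth_less[of xs N k i j] by (cases "i = j") auto

lemma incr_tuples_nth_less_iff:
  "xs \<in> incr_tuples N k \<Longrightarrow> i < k \<Longrightarrow> j < k \<Longrightarrow> xs!i < xs!j \<longleftrightarrow> i < j"
  using incr_tuples_nth_less[of xs N k i j] incr_tuples_nth_le[of xs N k j i] by (cases "i < j") auto

lemma incr_tuples_distinct: "xs \<in> incr_tuples N k \<Longrightarrow> distinct xs"
  by (auto simp: incr_tuples_def strict_sorted_iff)

lemma map_incr_tuples:
  assumes "strict_mono e" "xs \<in> incr_tuples N k"
  shows "map e xs \<in> incr_tuples (e ` N) k"
  using assms by (auto simp: incr_tuples_def sorted_wrt_map strict_mono_less)

lemma incr_tuples_image_strict_mono:
  assumes "strict_mono e" "xs \<in> incr_tuples (e ` N) k"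
  obtains xs' where "xs' \<in> incr_tuples N k" "xs = map e xs'"
proof
  have inj: "inj e" using assms(1) strict_mono_imp_inj_on by blast
  have sub: "set xs \<subseteq> e ` N" using assms(2) by (simp add: incr_tuples_def)
  show eq: "xs = map e (map (inv e) xs)"
    unfolding map_map by (rule sym, rule map_idI) (use sub in \<open>auto simp: f_inv_into_f\<close>)
  have "sorted_wrt (<) (map e (map (inv e) xs))" using assms(2) eq by (simp add: incr_tuples_def)
  then show "map (inv e) xs \<in> incr_tuples N k"
    using assms sub inv_f_f[OF inj]
    by (auto simp: incr_tuples_def sorted_wrt_map strict_mono_less)
qed

lemma interlaced_image_strict_mono:
  assumes "strict_mono e" "(xs, ys) \<in> interlaced (e ` N) k"
  obtains xs' ys' where "(xs', ys') \<in> interlaced N k" "xs = map e xs'" "ys = map e ys'"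
proof -
  have "xs \<in> incr_tuples (e ` N) k" "ys \<in> incr_tuples (e ` N) k"
    using assms(2) by (auto simp: interlaced_def)
  then obtain xs' ys' where xs': "xs' \<in> incr_tuples N k" "xs = map e xs'"
    and ys': "ys' \<in> incr_tuples N k" "ys = map e ys'"
    using incr_tuples_image_strict_mono[OF assms(1)] by metis
  have "(xs', ys') \<in> interlaced N k"
    using assms xs' ys' by (auto simp: interlaced_def incr_tuples_length strict_mono_less)
  with xs' ys' show ?thesis using that by blast
qed

lemma interlaced_disjoint:
  assumes "(xs, ys) \<in> interlaced N k"
  shows "set xs \<inter> set ys = {}"
proof -
  have X: "xs \<in> incr_tuples N k" and Y: "ys \<in> incr_tuples N k"
    and xy: "\<And>i. i < k \<Longrightarrow> xs!i < ys!i" and yx: "\<And>i. Suc i < k \<Longrightarrow> ys!i < xs!Suc i"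
    using assms by (auto simp: interlaced_def)
  have "xs!i \<noteq> ys!j \<and> ys!j \<noteq> xs!i" if "i < k" "j < k" for i j
  proof (cases "i \<le> j")
    case True
    then show ?thesis using xy[OF that(1)] incr_tuples_nth_le[OF Y True that(2)] by auto
  next
    case False
    then show ?thesis using yx[of j] incr_tuples_nth_le[OF X, of "Suc j" i] that by auto
  qed
  then show ?thesis
    using incr_tuples_length[OF X] incr_tuples_length[OF Y] by (auto simp: in_set_conv_nth)
qed

lemma ex_interlaced:
  assumes "infinite N"
  shows "\<exists>xs ys. (xs, ys) \<in> interlaced N k"
proof -
  define e where "e = enumerate N"
  have e: "strict_mono e" "range e = N"
    using assms by (simp_all add: e_def strict_mono_enumerate range_enumerate)
  define xs where "xs = map (\<lambda>i. e (2 * i)) [0..<k]"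
  define ys where "ys = map (\<lambda>i. e (2 * i + 1)) [0..<k]"
  have "(xs, ys) \<in> interlaced N k"
    using e by (auto simp: interlaced_def incr_tuples_def xs_def ys_def sorted_wrt_iff_nth_less
        strict_mono_less)
  then show ?thesis by blast
qed

section \<open>Types of disjoint pairs\<close>

definition disjoint_pair :: "nat \<Rightarrow> nat list \<Rightarrow> nat list \<Rightarrow> bool" where
  "disjoint_pair k xs ys \<longleftrightarrow>
     xs \<in> incr_tuples UNIV k \<and> ys \<in> incr_tuples UNIV k \<and> set xs \<inter> set ys = {}"

definition pair_type :: "nat list \<Rightarrow> nat list \<Rightarrow> (nat \<times> nat) set" where
  "pair_type xs ys = {(i, j). i < length xs \<and> j < length ys \<and> xs!i < ys!j}"

lemma disjoint_pair_map:
  assumes "strict_mono e" "disjoint_pair k xs ys"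
  shows "disjoint_pair k (map e xs) (map e ys)"
  using assms incr_tuples_UNIV[OF map_incr_tuples[OF assms(1)]] strict_mono_imp_inj_on[OF assms(1)]
  by (auto simp: disjoint_pair_def image_Int[symmetric])

lemma pair_type_map: "strict_mono e \<Longrightarrow> pair_type (map e xs) (map e ys) = pair_type xs ys"
  by (auto simp: pair_type_def strict_mono_less)

lemma pair_type_subset: "disjoint_pair k xs ys \<Longrightarrow> pair_type xs ys \<subseteq> {..<k} \<times> {..<k}"
  by (auto simp: pair_type_def disjoint_pair_def incr_tuples_length)

lemma card_support_disjoint_pair: "disjoint_pair k xs ys \<Longrightarrow> card (set xs \<union> set ys) = 2 * k"
  by (auto simp: disjoint_pair_def card_Un_disjoint distinct_card incr_tuples_distinct
      incr_tuples_length)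

lemma incr_tuples_less_iff_takeWhile:
  assumes "xs \<in> incr_tuples N k" "i < k"
  shows "xs!i < x \<longleftrightarrow> i < length (takeWhile (\<lambda>y. y < x) xs)"
proof
  let ?a = "length (takeWhile (\<lambda>y. y < x) xs)"
  show "i < ?a \<Longrightarrow> xs!i < x" by (metis nth_mem set_takeWhileD takeWhile_nth)
  assume "xs!i < x"
  show "i < ?a"
  proof (rule ccontr)
    assume "\<not> i < ?a"
    then have "\<not> xs!?a < x"
      using assms nth_length_takeWhile[of "\<lambda>y. y < x" xs] by (simp add: incr_tuples_length)
    moreover have "xs!?a \<le> xs!i" using \<open>\<not> i < ?a\<close> assms incr_tuples_nth_le by simp
    ultimately show False using \<open>xs!i < x\<close> by simp
  qed
qed

definition threshold :: "nat list \<Rightarrow> nat list \<Rightarrow> nat \<Rightarrow> nat" where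
  "threshold xs ys j = length (takeWhile (\<lambda>x. x < ys!j) xs)"

lemma threshold_le: "xs \<in> incr_tuples N k \<Longrightarrow> threshold xs ys j \<le> k"
  by (metis incr_tuples_length length_takeWhile_le threshold_def)

lemma pair_type_eq_threshold:
  assumes "xs \<in> incr_tuples N k" "ys \<in> incr_tuples N' k"
  shows "pair_type xs ys = {(i, j). i < k \<and> j < k \<and> i < threshold xs ys j}"
  using assms incr_tuples_less_iff_takeWhile[OF assms(1)]
  by (auto simp: pair_type_def threshold_def incr_tuples_length)

lemma threshold_mono:
  assumes xs: "xs \<in> incr_tuples N k" and ys: "ys \<in> incr_tuples N' k"
  shows "mono_on {..<k} (threshold xs ys)"
proof (rule mono_onI, rule ccontr)
  let ?a = "threshold xs ys"
  fix j j' assume "j \<in> {..<k}" "j' \<in> {..<k}" "j \<le> j'" "\<not> ?a j \<le> ?a j'"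
  then have "?a j' < ?a j" "j \<le> j'" "j' < k" by auto
  moreover have "?a j \<le> k" using threshold_le[OF xs] .
  ultimately have "?a j' < k" "xs!(?a j') < ys!j"
    using incr_tuples_less_iff_takeWhile[OF xs] by (auto simp: threshold_def)
  moreover have "ys!j \<le> ys!j'" using incr_tuples_nth_le[OF ys \<open>j \<le> j'\<close> \<open>j' < k\<close>] .
  ultimately show False using incr_tuples_less_iff_takeWhile[OF xs, of "?a j'" "ys!j'"]
    by (simp add: threshold_def)
qed

lemma card_less_set_incr_tuples:
  assumes "xs \<in> incr_tuples N k"
  shows "card {z \<in> set xs. z < x} = card {j. j < k \<and> xs!j < x}"
proof -
  have "{z \<in> set xs. z < x} = nth xs ` {j. j < k \<and> xs!j < x}"
    using incr_tuples_length[OF assms] by (auto simp: in_set_conv_nth)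
  moreover have "inj_on (nth xs) {j. j < k \<and> xs!j < x}"
    using inj_on_nth[OF incr_tuples_distinct[OF assms]] incr_tuples_length[OF assms] by simp
  ultimately show ?thesis by (simp add: card_image)
qed

lemma card_less_Un_disjoint:
  fixes A B :: "nat set"
  assumes "finite A" "finite B" "A \<inter> B = {}"
  shows "card {z \<in> A \<union> B. z < x} = card {z \<in> A. z < x} + card {z \<in> B. z < x}"
proof -
  have "{z \<in> A \<union> B. z < x} = {z \<in> A. z < x} \<union> {z \<in> B. z < x}" by blast
  then show ?thesis using assms by (simp add: card_Un_disjoint disjoint_iff)
qed

lemma inj_on_card_less:
  fixes S :: "nat set"
  assumes "finite S"
  shows "inj_on (\<lambda>x. card {z \<in> S. z < x}) S"
proof (rule linorder_inj_onI')
  fix x y assume "x \<in> S" "y \<in> S" "x < y"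
  then have "{z \<in> S. z < x} \<subset> {z \<in> S. z < y}" by auto
  then have "card {z \<in> S. z < x} < card {z \<in> S. z < y}"
    by (rule psubset_card_mono[rotated]) (use assms in simp)
  then show "card {z \<in> S. z < x} \<noteq> card {z \<in> S. z < y}" by simp
qed

lemma card_less_nth_disjoint_pair:
  assumes "disjoint_pair k xs ys" "i < k"
  shows "card {z \<in> set xs \<union> set ys. z < xs!i} = i + card {j. j < k \<and> (i, j) \<notin> pair_type xs ys}"
    and "card {z \<in> set xs \<union> set ys. z < ys!i} = card {j. j < k \<and> (j, i) \<in> pair_type xs ys} + i"
proof -
  have X: "xs \<in> incr_tuples UNIV k" and Y: "ys \<in> incr_tuples UNIV k"
    and D: "set xs \<inter> set ys = {}" using assms(1) by (auto simp: disjoint_pair_def)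
  have neq: "xs!i' \<noteq> ys!j'" if "i' < k" "j' < k" for i' j'
    using D that X Y by (metis disjoint_iff incr_tuples_length nth_mem)
  have own: "{j. j < k \<and> zs!j < zs!i} = {..<i}" if "zs \<in> incr_tuples UNIV k" for zs
    using incr_tuples_nth_less_iff[OF that _ \<open>i < k\<close>] \<open>i < k\<close> by auto
  have count: "card {z \<in> set xs \<union> set ys. z < x}
      = card {j. j < k \<and> xs!j < x} + card {j. j < k \<and> ys!j < x}" for x
    using card_less_Un_disjoint[OF _ _ D] card_less_set_incr_tuples[OF X]
      card_less_set_incr_tuples[OF Y] by simp
  have "{j. j < k \<and> ys!j < xs!i} = {j. j < k \<and> (i, j) \<notin> pair_type xs ys}"
    using \<open>i < k\<close> X Y
    by (auto simp: pair_type_def incr_tuples_length) (metis linorder_neqE_nat neq)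
  then show "card {z \<in> set xs \<union> set ys. z < xs!i} = i + card {j. j < k \<and> (i, j) \<notin> pair_type xs ys}"
    using count own[OF X] by simp
  have "{j. j < k \<and> xs!j < ys!i} = {j. j < k \<and> (j, i) \<in> pair_type xs ys}"
    using \<open>i < k\<close> X Y by (auto simp: pair_type_def incr_tuples_length)
  then show "card {z \<in> set xs \<union> set ys. z < ys!i} = card {j. j < k \<and> (j, i) \<in> pair_type xs ys} + i"
    using count own[OF Y] by simp
qed

text \<open>The type fixes the rank of every entry within the support.\<close>
lemma disjoint_pair_eqI:
  assumes xy: "disjoint_pair k xs ys" and xy': "disjoint_pair k xs' ys'"
    and supp: "set xs \<union> set ys = set xs' \<union> set ys'" and type: "pair_type xs ys = pair_type xs' ys'"
  shows "xs = xs'" "ys = ys'"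
proof -
  note rank = card_less_nth_disjoint_pair
  have lengths: "length xs = k" "length ys = k" "length xs' = k" "length ys' = k"
    using xy xy' by (auto simp: disjoint_pair_def incr_tuples_length)
  have fin: "finite (set xs \<union> set ys)" by simp
  have "xs!i = xs'!i \<and> ys!i = ys'!i" if "i < k" for i
  proof
    show "xs!i = xs'!i"
      by (rule inj_onD[OF inj_on_card_less[OF fin]])
        (use rank(1)[OF xy that] rank(1)[OF xy' that] supp type that lengths in auto)
    show "ys!i = ys'!i"
      by (rule inj_onD[OF inj_on_card_less[OF fin]])
        (use rank(2)[OF xy that] rank(2)[OF xy' that] supp type that lengths in auto)
  qed
  then show "xs = xs'" "ys = ys'" using lengths by (auto intro: nth_equalityI)
qed

section \<open>Homogeneity of types\<close>

lemma Ramsey_finite_colours: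
  fixes f :: "'a set \<Rightarrow> 'b"
  assumes "infinite Z" "finite C" "\<And>X. X \<subseteq> Z \<Longrightarrow> finite X \<Longrightarrow> card X = r \<Longrightarrow> f X \<in> C"
  obtains Y where "Y \<subseteq> Z" "infinite Y"
    "\<And>X X'. \<lbrakk>X \<subseteq> Y; finite X; card X = r; X' \<subseteq> Y; finite X'; card X' = r\<rbrakk> \<Longrightarrow> f X = f X'"
proof -
  obtain h where h: "bij_betw h C {0..<card C}" using ex_bij_betw_finite_nat[OF assms(2)] by blast
  have "\<forall>X. X \<subseteq> Z \<and> finite X \<and> card X = r \<longrightarrow> h (f X) < card C"
    using bij_betwE[OF h] assms(3) by fastforce
  from Ramsey[OF assms(1) this] obtain Y t where Y: "Y \<subseteq> Z" "infinite Y"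
    and t: "\<forall>X. X \<subseteq> Y \<and> finite X \<and> card X = r \<longrightarrow> h (f X) = t"
    by blast
  show ?thesis
  proof (rule that[OF Y])
    fix X X' assume X: "X \<subseteq> Y" "finite X" "card X = r" and X': "X' \<subseteq> Y" "finite X'" "card X' = r"
    show "f X = f X'"
    proof (rule inj_onD[OF bij_betw_imp_inj_on[OF h]])
      show "h (f X) = h (f X')" using t X X' by simp
      show "f X \<in> C" "f X' \<in> C" using assms(3) X X' Y(1) by auto
    qed
  qed
qed

text \<open>Colour a \<open>2k\<close>-set by the types of the \<open>G\<close>-pairs it supports; since a disjoint pair is
  determined by support and type, on a monochromatic set \<open>G\<close> depends only on the type.\<close>
lemma ramsey_pair_type:
  fixes G :: "nat list \<Rightarrow> nat list \<Rightarrow> bool"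
  obtains e :: "nat \<Rightarrow> nat" where "strict_mono e"
    "\<And>xs ys xs' ys'. disjoint_pair k xs ys \<Longrightarrow> disjoint_pair k xs' ys' \<Longrightarrow>
       pair_type xs ys = pair_type xs' ys' \<Longrightarrow> G (map e xs) (map e ys) \<Longrightarrow> G (map e xs') (map e ys')"
proof -
  define good_types where "good_types S =
    {pair_type xs ys | xs ys. disjoint_pair k xs ys \<and> set xs \<union> set ys = S \<and> G xs ys}" for S
  have colour: "good_types X \<in> Pow (Pow ({..<k} \<times> {..<k}))" for X
    using pair_type_subset by (auto simp: good_types_def)
  obtain Y where Y: "infinite Y" and hom: "\<And>X X'. \<lbrakk>X \<subseteq> Y; finite X; card X = 2 * k;
      X' \<subseteq> Y; finite X'; card X' = 2 * k\<rbrakk> \<Longrightarrow> good_types X = good_types X'"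
  proof -
    have "finite (Pow (Pow ({..<k} \<times> {..<k})))" by simp
    then show thesis
      by (rule Ramsey_finite_colours[where f = good_types and r = "2 * k", OF infinite_UNIV_nat _ colour])
        (rule that)
  qed
  define e where "e = enumerate Y"
  have e: "strict_mono e" "range e \<subseteq> Y"
    using Y by (auto simp: e_def strict_mono_enumerate range_enumerate)
  show ?thesis
  proof (rule that[OF e(1)])
    fix xs ys xs' ys'
    assume xy: "disjoint_pair k xs ys" and xy': "disjoint_pair k xs' ys'"
      and type: "pair_type xs ys = pair_type xs' ys'" and G: "G (map e xs) (map e ys)"
    note exy = disjoint_pair_map[OF e(1) xy] and exy' = disjoint_pair_map[OF e(1) xy']
    let ?S = "set (map e xs) \<union> set (map e ys)" and ?S' = "set (map e xs') \<union> set (map e ys')"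
    have "pair_type xs ys \<in> good_types ?S"
      unfolding good_types_def using exy G pair_type_map[OF e(1)] by blast
    moreover have "good_types ?S = good_types ?S'"
      by (rule hom) (use e(2) card_support_disjoint_pair[OF exy] card_support_disjoint_pair[OF exy'] in auto)
    ultimately have "pair_type (map e xs') (map e ys') \<in> good_types ?S'"
      using type pair_type_map[OF e(1)] by simp
    then obtain zs ws where zw: "disjoint_pair k zs ws" "set zs \<union> set ws = ?S'"
      "pair_type zs ws = pair_type (map e xs') (map e ys')" "G zs ws"
      unfolding good_types_def by auto
    with disjoint_pair_eqI[OF zw(1) exy'] show "G (map e xs') (map e ys')" by simp
  qed
qed

section \<open>A common partner of prescribed type\<close>

lemma disjoint_pair_threshold:
  assumes "xs \<in> incr_tuples UNIV k" "zs \<in> incr_tuples UNIV k"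
    and less: "\<And>i j. i < k \<Longrightarrow> j < k \<Longrightarrow> i < a j \<Longrightarrow> xs!i < zs!j"
    and greater: "\<And>i j. i < k \<Longrightarrow> j < k \<Longrightarrow> a j \<le> i \<Longrightarrow> zs!j < xs!i"
  shows "disjoint_pair k xs zs" "pair_type xs zs = {(i, j). i < k \<and> j < k \<and> i < a j}"
proof -
  have lengths: "length xs = k" "length zs = k" using assms(1,2) by (auto simp: incr_tuples_length)
  have "xs!i \<noteq> zs!j" "zs!j \<noteq> xs!i" if "i < k" "j < k" for i j
    using less[OF that] greater[OF that] by (cases "i < a j"; simp)+
  then have "set xs \<inter> set zs = {}" using lengths by (auto simp: in_set_conv_nth)
  then show "disjoint_pair k xs zs" using assms(1,2) by (simp add: disjoint_pair_def)
  show "pair_type xs zs = {(i, j). i < k \<and> j < k \<and> i < a j}"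
    using less greater lengths by (auto simp: pair_type_def) (meson not_le order.asym)
qed

lemma multiples_gap:
  fixes k :: nat
  assumes "u \<in> range (\<lambda>t. Suc k * Suc t)" "v \<in> range (\<lambda>t. Suc k * Suc t)" "u < v"
  shows "u + k < v"
proof -
  obtain s t where "u = Suc k * Suc s" "v = Suc k * Suc t" using assms(1,2) by blast
  moreover from this have "Suc k * Suc s < Suc k * Suc t" using assms(3) by (simp only:)
  then have "Suc s < Suc t" using mult_less_cancel1[of "Suc k" "Suc s" "Suc t"] by blast
  ultimately have "u + Suc k \<le> v" using mult_le_mono2[of "Suc (Suc s)" "Suc t" "Suc k"] by simp
  then show ?thesis by simp
qed

text \<open>Entry \<open>j\<close> sits just above \<open>ys\<^sub>a\<^sub>j\<^sub>-\<^sub>1\<close>, shifted by \<open>j\<close> so that the entries increase; between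
  consecutive multiples of \<open>k + 1\<close> there is room for the \<open>k\<close> shifts.\<close>
definition partner :: "nat \<Rightarrow> (nat \<Rightarrow> nat) \<Rightarrow> nat list \<Rightarrow> nat list" where
  "partner k a ys = map (\<lambda>j. (case a j of 0 \<Rightarrow> 0 | Suc m \<Rightarrow> Suc (ys!m)) + j) [0..<k]"

lemma nth_partner: "j < k \<Longrightarrow> partner k a ys ! j = (case a j of 0 \<Rightarrow> 0 | Suc m \<Rightarrow> Suc (ys!m)) + j"
  by (simp add: partner_def)

lemma nth_less_partner:
  assumes ys: "ys \<in> incr_tuples N k" and a_le: "\<And>j. a j \<le> k" and "i < k" "j < k" "i < a j"
  shows "ys!i < partner k a ys ! j"
proof -
  obtain m where m: "a j = Suc m" using \<open>i < a j\<close> by (cases "a j") auto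
  then have "ys!i \<le> ys!m" using incr_tuples_nth_le[OF ys] a_le[of j] \<open>i < k\<close> \<open>i < a j\<close> by simp
  then show ?thesis using nth_partner[OF \<open>j < k\<close>] m by simp
qed

lemma partner_less_nth:
  assumes xy: "(xs, ys) \<in> interlaced (range (\<lambda>t. Suc k * Suc t)) k" and "i < k" "j < k" "a j \<le> i"
  shows "partner k a ys ! j < xs!i"
proof -
  let ?Q = "range (\<lambda>t. Suc k * Suc t)"
  have X: "xs \<in> incr_tuples ?Q k" and Y: "ys \<in> incr_tuples ?Q k"
    and yx_less: "\<And>i. Suc i < k \<Longrightarrow> ys!i < xs!Suc i"
    using xy by (auto simp: interlaced_def)
  have inQ: "xs!i \<in> ?Q" "ys!i \<in> ?Q" if "i < k" for i
    using X Y that nth_mem[of i xs] nth_mem[of i ys] by (auto simp: incr_tuples_def)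
  show ?thesis
  proof (cases "a j")
    case 0
    have "k < xs!0" using inQ(1)[of 0] assms by auto
    moreover have "xs!0 \<le> xs!i" using incr_tuples_nth_le[OF X] assms by simp
    ultimately show ?thesis using nth_partner[OF \<open>j < k\<close>] 0 \<open>j < k\<close> by simp
  next
    case (Suc m)
    then have "Suc m < k" using assms by simp
    then have "ys!m + k < xs!Suc m"
      using multiples_gap[OF inQ(2)[of m] inQ(1)[of "Suc m"] yx_less[of m]] by simp
    moreover have "xs!Suc m \<le> xs!i" using incr_tuples_nth_le[OF X] assms Suc by simp
    ultimately show ?thesis using nth_partner[OF \<open>j < k\<close>] Suc \<open>j < k\<close> by simp
  qed
qed

lemma partner_incr_tuples:
  assumes xy: "(xs, ys) \<in> interlaced (range (\<lambda>t. Suc k * Suc t)) k"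
    and a_le: "\<And>j. a j \<le> k" and a_mono: "mono_on {..<k} a"
  shows "partner k a ys \<in> incr_tuples UNIV k"
proof -
  have Y: "ys \<in> incr_tuples (range (\<lambda>t. Suc k * Suc t)) k"
    and xy_less: "\<And>i. i < k \<Longrightarrow> xs!i < ys!i"
    using xy by (auto simp: interlaced_def)
  have "partner k a ys ! j < partner k a ys ! j'" if "j < j'" "j' < k" for j j'
  proof (cases "a j = a j'")
    case True
    then show ?thesis using nth_partner that by simp
  next
    case False
    then have "a j < a j'" "a j < k" using mono_onD[OF a_mono, of j j'] a_le[of j'] that by auto
    then have "partner k a ys ! j < xs!(a j)" "ys!(a j) < partner k a ys ! j'"
      using partner_less_nth[OF xy, of "a j" j] nth_less_partner[OF Y a_le, of "a j" j'] that
      by auto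
    then show ?thesis using xy_less[OF \<open>a j < k\<close>] by simp
  qed
  then show ?thesis by (auto simp: incr_tuples_def partner_def sorted_wrt_iff_nth_less)
qed

lemma interlaced_common_partner:
  assumes ab: "disjoint_pair k as bs" and xy: "(xs, ys) \<in> interlaced (range (\<lambda>t. Suc k * Suc t)) k"
  obtains zs where "disjoint_pair k xs zs" "disjoint_pair k ys zs"
    "pair_type xs zs = pair_type as bs" "pair_type ys zs = pair_type as bs"
proof
  let ?a = "threshold as bs" and ?zs = "partner k (threshold as bs) ys"
  have "as \<in> incr_tuples UNIV k" "bs \<in> incr_tuples UNIV k" using ab by (simp_all add: disjoint_pair_def)
  then have a_le: "\<And>j. ?a j \<le> k" and a_mono: "mono_on {..<k} ?a"
    and type: "pair_type as bs = {(i, j). i < k \<and> j < k \<and> i < ?a j}"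
    by (simp_all add: threshold_le threshold_mono pair_type_eq_threshold)
  have X: "xs \<in> incr_tuples UNIV k" and Y: "ys \<in> incr_tuples UNIV k"
    and xy_less: "\<And>i. i < k \<Longrightarrow> xs!i < ys!i"
    using xy by (auto simp: interlaced_def incr_tuples_UNIV)
  note Z = partner_incr_tuples[where a = ?a, OF xy a_le a_mono]
  note above = nth_less_partner[where a = ?a, OF Y a_le]
    and below = partner_less_nth[where a = ?a, OF xy]
  have "xs!i < ?zs!j" if "i < k" "j < k" "i < ?a j" for i j
    using xy_less[of i] above[OF that] that by simp
  note xs_zs = disjoint_pair_threshold[OF X Z this below]
  have "?zs!j < ys!i" if "i < k" "j < k" "?a j \<le> i" for i j
    using xy_less[of i] below[OF that] that by simp
  note ys_zs = disjoint_pair_threshold[OF Y Z above this]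
  show "disjoint_pair k xs ?zs" "disjoint_pair k ys ?zs"
    "pair_type xs ?zs = pair_type as bs" "pair_type ys ?zs = pair_type as bs"
    using xs_zs ys_zs type by simp_all
qed

section \<open>Reindexing a Lipschitz map\<close>

lemma hamming_le_length: "hamming xs ys \<le> length xs"
  unfolding hamming_def by (rule order.trans[OF card_mono[of "{..<length xs}"]]) auto

lemma hamming_map_inj:
  assumes "inj e" "length xs = length ys"
  shows "hamming (map e xs) (map e ys) = hamming xs ys"
  unfolding hamming_def
  by (rule arg_cong[where f = card], rule Collect_cong) (use assms in \<open>auto simp: inj_eq\<close>)

lemma hamming_lipschitz_reindex:
  assumes e: "strict_mono e" and f: "hamming_lipschitz M d k f"
  shows "hamming_lipschitz M d k (\<lambda>xs. f (map e xs))"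
proof -
  have inj: "inj e" using e strict_mono_imp_inj_on by blast
  have map_e: "map e xs \<in> incr_tuples UNIV k" if "xs \<in> incr_tuples UNIV k" for xs
    using incr_tuples_UNIV[OF map_incr_tuples[OF e that]] .
  obtain C where C: "\<forall>xs\<in>incr_tuples UNIV k. \<forall>ys\<in>incr_tuples UNIV k.
      d (f xs) (f ys) \<le> C * real (hamming xs ys)" and im: "f ` incr_tuples UNIV k \<subseteq> M"
    using f unfolding hamming_lipschitz_def by blast
  have "d (f (map e xs)) (f (map e ys)) \<le> C * real (hamming xs ys)"
    if "xs \<in> incr_tuples UNIV k" "ys \<in> incr_tuples UNIV k" for xs ys
  proof -
    have "d (f (map e xs)) (f (map e ys)) \<le> C * real (hamming (map e xs) (map e ys))"
      using C map_e[OF that(1)] map_e[OF that(2)] by blast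
    then show ?thesis
      using hamming_map_inj[OF inj, of xs ys] that by (simp add: incr_tuples_length)
  qed
  with im map_e show ?thesis unfolding hamming_lipschitz_def by blast
qed

lemma bdd_above_hamming_lipschitz:
  assumes "hamming_lipschitz M d k f"
  shows "bdd_above ((\<lambda>(xs, ys). d (f xs) (f ys)) ` (incr_tuples UNIV k \<times> incr_tuples UNIV k))"
proof -
  obtain C where C: "\<forall>xs\<in>incr_tuples UNIV k. \<forall>ys\<in>incr_tuples UNIV k.
      d (f xs) (f ys) \<le> C * real (hamming xs ys)"
    using assms unfolding hamming_lipschitz_def by blast
  have "d (f xs) (f ys) \<le> \<bar>C\<bar> * real k"
    if "xs \<in> incr_tuples UNIV k" "ys \<in> incr_tuples UNIV k" for xs ys
  proof -
    have "real (hamming xs ys) \<le> real k"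
      using hamming_le_length[of xs ys] incr_tuples_length[OF that(1)] by simp
    then have "C * real (hamming xs ys) \<le> \<bar>C\<bar> * real k"
      by (meson abs_ge_self abs_ge_zero mult_mono of_nat_0_le_iff order.trans)
    then show ?thesis using C that by (meson order.trans)
  qed
  then show ?thesis by (intro bdd_aboveI2[where M = "\<bar>C\<bar> * real k"]) auto
qed

lemma Hpairs_subset: "Hpairs N k j \<subseteq> incr_tuples N k \<times> incr_tuples N k"
  by (auto simp: Hpairs_def)

lemma Hpairs_nonempty:
  assumes "j < k" shows "Hpairs UNIV k j \<noteq> {}"
proof -
  define xs where "xs = map (\<lambda>i. 2 * i) [0..<k]"
  define ys where "ys = map (\<lambda>i. if i = j then 2 * i + 1 else 2 * i) [0..<k]"
  have "(xs, ys) \<in> Hpairs UNIV k j"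
    using assms by (auto simp: Hpairs_def incr_tuples_def xs_def ys_def sorted_wrt_iff_nth_less)
  then show ?thesis by blast
qed

lemma Hpairs_map:
  assumes "strict_mono e" "(xs, ys) \<in> Hpairs UNIV k j" "j < k"
  shows "(map e xs, map e ys) \<in> Hpairs UNIV k j"
  using assms incr_tuples_UNIV[OF map_incr_tuples[OF assms(1)]]
  by (auto simp: Hpairs_def incr_tuples_length strict_mono_less)

lemma alpha_coef_nonneg:
  assumes "Metric_space M d" "hamming_lipschitz M d k f" "j < k"
  shows "0 \<le> alpha_coef d k f j"
proof -
  obtain pr where "pr \<in> Hpairs UNIV k j" using Hpairs_nonempty[OF assms(3)] by blast
  moreover have "bdd_above ((\<lambda>(xs, ys). d (f xs) (f ys)) ` Hpairs UNIV k j)"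
    using bdd_above_hamming_lipschitz[OF assms(2)] Hpairs_subset by (rule bdd_above_mono[OF _ image_mono])
  ultimately show ?thesis
    unfolding alpha_coef_def using Metric_space.nonneg[OF assms(1)]
    by (intro cSUP_upper2) (auto split: prod.splits)
qed

lemma alpha_coef_reindex_le:
  assumes e: "strict_mono e" and f: "hamming_lipschitz M d k f" and "j < k"
  shows "alpha_coef d k (\<lambda>xs. f (map e xs)) j \<le> alpha_coef d k f j"
  unfolding alpha_coef_def
proof (rule cSUP_mono[OF Hpairs_nonempty[OF \<open>j < k\<close>]])
  show "bdd_above ((\<lambda>(xs, ys). d (f xs) (f ys)) ` Hpairs UNIV k j)"
    using bdd_above_hamming_lipschitz[OF f] Hpairs_subset by (rule bdd_above_mono[OF _ image_mono])
  fix pr assume pr: "pr \<in> Hpairs UNIV k j"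
  obtain xs ys where "pr = (xs, ys)" by (cases pr)
  with pr show "\<exists>pr'\<in>Hpairs UNIV k j. (case pr of (xs, ys) \<Rightarrow> d (f (map e xs)) (f (map e ys)))
      \<le> (case pr' of (xs, ys) \<Rightarrow> d (f xs) (f ys))"
    using Hpairs_map[OF e _ \<open>j < k\<close>] by (intro bexI[of _ "(map e xs, map e ys)"]) auto
qed

lemma alpha_norm_reindex_le:
  assumes "Metric_space M d" "strict_mono e" "hamming_lipschitz M d k f" "0 < p"
  shows "alpha_norm p d k (\<lambda>xs. f (map e xs)) \<le> alpha_norm p d k f"
proof -
  note nonneg = alpha_coef_nonneg[OF assms(1) hamming_lipschitz_reindex[OF assms(2,3)]]
  have "(\<Sum>j<k. alpha_coef d k (\<lambda>xs. f (map e xs)) j powr p) \<le> (\<Sum>j<k. alpha_coef d k f j powr p)"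
    using nonneg alpha_coef_reindex_le[OF assms(2,3)] assms(4)
    by (intro sum_mono powr_mono2) auto
  then show ?thesis unfolding alpha_norm_def
    using assms(4) by (intro powr_mono2 sum_nonneg) auto
qed

lemma lambda_HIC_imp_lambda_HC:
  assumes "lambda_HIC lam p M d"
  shows "lambda_HC lam p M d"
  unfolding lambda_HC_def
proof (intro allI impI)
  fix k f assume "hamming_lipschitz M d k f"
  then obtain N where N: "infinite N"
    and bound: "\<forall>(xs, ys) \<in> interlaced N k. d (f xs) (f ys) \<le> lam * alpha_norm p d k f"
    using assms unfolding lambda_HIC_def by blast
  obtain xs ys where I: "(xs, ys) \<in> interlaced N k" using ex_interlaced[OF N] by blast
  have "xs \<in> incr_tuples UNIV k" "ys \<in> incr_tuples UNIV k"
    using I by (auto simp: interlaced_def incr_tuples_UNIV)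
  moreover have "d (f xs) (f ys) \<le> lam * alpha_norm p d k f" using bound I by fastforce
  ultimately show "\<exists>xs \<in> incr_tuples UNIV k. \<exists>ys \<in> incr_tuples UNIV k.
      set xs \<inter> set ys = {} \<and> d (f xs) (f ys) \<le> lam * alpha_norm p d k f"
    using interlaced_disjoint[OF I] by blast
qed

lemma lambda_HC_reindex:
  assumes M: "Metric_space M d" and "0 < p" "0 \<le> lam" and HC: "lambda_HC lam p M d"
    and e: "strict_mono e" and f: "hamming_lipschitz M d k f"
  obtains as bs where "disjoint_pair k as bs"
    "d (f (map e as)) (f (map e bs)) \<le> lam * alpha_norm p d k f"
proof -
  obtain as bs where "as \<in> incr_tuples UNIV k" "bs \<in> incr_tuples UNIV k" "set as \<inter> set bs = {}"
    and bound: "d (f (map e as)) (f (map e bs)) \<le> lam * alpha_norm p d k (\<lambda>xs. f (map e xs))"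
    using HC hamming_lipschitz_reindex[OF e f] unfolding lambda_HC_def by blast
  moreover have "lam * alpha_norm p d k (\<lambda>xs. f (map e xs)) \<le> lam * alpha_norm p d k f"
    using alpha_norm_reindex_le[OF M e f \<open>0 < p\<close>] \<open>0 \<le> lam\<close> by (rule mult_left_mono)
  ultimately show thesis using that disjoint_pair_def order.trans by blast
qed

lemma infinite_multiples: "infinite (range (\<lambda>t. Suc k * Suc t))"
proof (rule range_inj_infinite, rule injI)
  fix s t assume "Suc k * Suc s = Suc k * Suc t"
  then show "s = t" by (simp only: mult_cancel_left) simp
qed

lemma lambda_HC_imp_lambda_HIC:
  assumes M: "Metric_space M d" and "0 < p" "0 \<le> lam" and HC: "lambda_HC lam p M d"
  shows "lambda_HIC (2 * lam) p M d"
  unfolding lambda_HIC_def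
proof (intro allI impI)
  fix k f assume f: "hamming_lipschitz M d k f"
  let ?c = "lam * alpha_norm p d k f"
  obtain e where e: "strict_mono e"
    and type_inv: "\<And>xs ys xs' ys'. disjoint_pair k xs ys \<Longrightarrow> disjoint_pair k xs' ys' \<Longrightarrow>
       pair_type xs ys = pair_type xs' ys' \<Longrightarrow> d (f (map e xs)) (f (map e ys)) \<le> ?c \<Longrightarrow>
       d (f (map e xs')) (f (map e ys')) \<le> ?c"
    by (rule ramsey_pair_type[where G = "\<lambda>xs ys. d (f xs) (f ys) \<le> ?c"]) (rule that)
  obtain as bs where ab: "disjoint_pair k as bs" and good: "d (f (map e as)) (f (map e bs)) \<le> ?c"
    by (rule lambda_HC_reindex[OF M \<open>0 < p\<close> \<open>0 \<le> lam\<close> HC e f]) (rule that)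
  have fM: "f xs \<in> M" if "xs \<in> incr_tuples UNIV k" for xs
    using f that unfolding hamming_lipschitz_def by blast
  define N where "N = e ` range (\<lambda>t. Suc k * Suc t)"
  have "d (f xs) (f ys) \<le> 2 * lam * alpha_norm p d k f" if I: "(xs, ys) \<in> interlaced N k" for xs ys
  proof -
    obtain xs' ys' where I': "(xs', ys') \<in> interlaced (range (\<lambda>t. Suc k * Suc t)) k"
      and xs: "xs = map e xs'" and ys: "ys = map e ys'"
      by (rule interlaced_image_strict_mono[OF e I[unfolded N_def]]) (rule that)
    obtain zs where "disjoint_pair k xs' zs" "disjoint_pair k ys' zs"
      "pair_type xs' zs = pair_type as bs" "pair_type ys' zs = pair_type as bs"
      by (rule interlaced_common_partner[OF ab I']) (rule that)
    then have "d (f xs) (f (map e zs)) \<le> ?c" "d (f ys) (f (map e zs)) \<le> ?c"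
      using type_inv[OF ab _ _ good] xs ys by simp_all
    moreover have "f xs \<in> M" "f ys \<in> M" "f (map e zs) \<in> M"
      using I' \<open>disjoint_pair k xs' zs\<close> unfolding xs ys
      by (auto intro!: fM incr_tuples_UNIV[OF map_incr_tuples[OF e]]
          simp: interlaced_def disjoint_pair_def)
    ultimately show ?thesis
      using Metric_space.triangle[OF M, of "f xs" "f (map e zs)" "f ys"]
        Metric_space.commute[OF M, of "f (map e zs)" "f ys"]
      by simp
  qed
  moreover note infinite_multiples[of k]
  then have "infinite N"
    unfolding N_def using finite_imageD[OF _ strict_mono_imp_inj_on[OF e]] by blast
  ultimately show "\<exists>N. infinite N \<and> (\<forall>(xs, ys) \<in> interlaced N k.
      d (f xs) (f ys) \<le> 2 * lam * alpha_norm p d k f)"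
    by (intro exI[of _ N]) auto
qed

theorem mainTheorem4:
  fixes M :: "'a set" and d :: "'a \<Rightarrow> 'a \<Rightarrow> real" and p :: real
  assumes "Metric_space M d" and "1 < p"
  shows "HC p M d \<longleftrightarrow> HIC p M d"
proof
  assume "HC p M d"
  then obtain lam where "0 < lam" "lambda_HC lam p M d" unfolding HC_def by blast
  then have "lambda_HIC (2 * lam) p M d"
    using lambda_HC_imp_lambda_HIC[OF assms(1)] \<open>1 < p\<close> by simp
  with \<open>0 < lam\<close> show "HIC p M d" unfolding HIC_def by (intro exI[of _ "2 * lam"]) simp
next
  assume "HIC p M d"
  then show "HC p M d" unfolding HC_def HIC_def using lambda_HIC_imp_lambda_HC by blast
qed

end
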